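(* For all $t\in\mathbb N$ the probability distribution $c_t$ on $\mathbb Z$ has mean $0$ and variance $v_t$.
   Context: Let $\mathsf r(n)$ be the number of (overlapping) occurrences of $\mathtt{11}$ in the binary expansion of $n\in\mathbb N=\{0,1,\dots\}$, and $d(t,n)=\mathsf r(n+t)-\mathsf r(n)$. For $k\in\mathbb Z$ let $c_t(k)$ be the asymptotic density (which exists) of $\{n\in\mathbb N:d(t,n)=k\}$; these values form a probability distribution $c_t$ on $\mathbb Z$. Define $(v_t)_{t\in\mathbb N}$ by $v_0=0$, $v_1=3/2$, and $v_{4t}=v_{2t}$, $v_{4t+2}=v_{2t+1}+1$, $v_{2t+1}=\frac{v_t+v_{t+1}}2+\frac34$ for all $t\in\mathbb N$. *)

theory Defs
  imports "HOL-Analysis.Analysis"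
begin

text \<open>r n: number of (overlapping) occurrences of the block 11 in the binary
  expansion of n.  The lowest two binary digits of n are 11 iff n mod 4 = 3.\<close>
fun r :: "nat \<Rightarrow> nat" where
  "r n = (if n < 2 then 0 else (if n mod 4 = 3 then 1 else 0) + r (n div 2))"

definition d :: "nat \<Rightarrow> nat \<Rightarrow> int" where
  "d t n = int (r (n + t)) - int (r n)"

definition c :: "nat \<Rightarrow> int \<Rightarrow> real" where
  "c t k = lim (\<lambda>N. real (card {n. n < N \<and> d t n = k}) / real N)"

function v :: "nat \<Rightarrow> real" where
  "v n = (if n = 0 then 0 else if n = 1 then 3/2
          else if even n then (if even (n div 2) then v (n div 2) else v (n div 2) + 1)
          else (v (n div 2) + v (n div 2 + 1)) / 2 + 3/4)"
  by pat_completeness auto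
termination by (relation "Wellfounded.measure id") (auto elim!: oddE)

end

theory Submission
  imports Defs "HOL-Probability.Characteristic_Functions" "HOL-Real_Asymp.Real_Asymp"
begin

(* Splitting n by parity, the binary recursion of r gives
     d(2t, 2n) = d(t, n),       d(2t, 2n+1) = d(t, n) + [n+t odd] - [n odd],
     d(2t+1, 2n) = d(t, n) + [n+t odd],       d(2t+1, 2n+1) = d(t+1, n) - [n odd].
   Hence the densities c_t^b(k) of {n. d(t, n) = k, n odd = b} exist, and each is the average of
   two shifted densities of level floor(t/2) or floor(t/2) + 1. Mass, first and second moment
   transform affinely under shifting and averaging, so by induction on t both parity classes
   have mass 1/2, first moments +[t odd]/4 and -[t odd]/4, and second moments adding up to v_t.
   The one self-referential case c_1^1(k) = (c_1^0(k) + c_1^1(k+1))/2 is handled by an a priori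
   bound with weight 10 + k^2; its moments are then the unique solution of linear equations. *)

(* The equations are unconditional and recursive: the simplifier would unfold them forever. *)
declare r.simps [simp del] v.simps [simp del]

lemma r_double: "r (2 * m) = r m"
proof (cases "m = 0")
  case False
  have "2 * m mod 4 \<noteq> 3" by presburger
  with False show ?thesis by (subst r.simps) simp
qed simp

lemma r_double_plus_one: "r (2 * m + 1) = of_bool (odd m) + r m"
proof (cases "m = 0")
  case False
  have "(2 * m + 1) mod 4 = 3 \<longleftrightarrow> odd m" by presburger
  with False show ?thesis by (subst r.simps) simp
qed (simp add: r.simps)

lemma d_0_left: "d 0 n = 0"
  by (simp add: d_def)

lemma d_even_even: "d (2 * t) (2 * n) = d t n"
  unfolding d_def by (metis r_double add_mult_distrib2)

lemma d_even_odd: "d (2 * t) (2 * n + 1) = d t n + of_bool (odd (n + t)) - of_bool (odd n)"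
proof -
  have "2 * n + 1 + 2 * t = 2 * (n + t) + 1" by simp
  then show ?thesis
    unfolding d_def using r_double_plus_one[of n] r_double_plus_one[of "n + t"] by simp
qed

lemma d_odd_even: "d (2 * t + 1) (2 * n) = d t n + of_bool (odd (n + t))"
proof -
  have "2 * n + (2 * t + 1) = 2 * (n + t) + 1" by simp
  then show ?thesis
    unfolding d_def using r_double[of n] r_double_plus_one[of "n + t"] by simp
qed

lemma d_odd_odd: "d (2 * t + 1) (2 * n + 1) = d (t + 1) n - of_bool (odd n)"
proof -
  have "2 * n + 1 + (2 * t + 1) = 2 * (n + (t + 1))" by simp
  then show ?thesis
    unfolding d_def using r_double[of "n + (t + 1)"] r_double_plus_one[of n] by simp
qed

lemma d_1_le: "d 1 n \<le> 1"
proof (induction n rule: less_induct)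
  case (less n)
  show ?case
  proof (cases "even n")
    case True
    then obtain m where "n = 2 * m" by blast
    then show ?thesis using d_odd_even[of 0 m] by (simp add: d_0_left)
  next
    case False
    then obtain m where "n = 2 * m + 1" using oddE by blast
    then show ?thesis using less.IH[of m] d_odd_odd[of 0 m] by simp
  qed
qed

lemma binary_induct [case_names zero one even odd]:
  fixes P :: "nat \<Rightarrow> bool"
  assumes "P 0" and "P 1"
    and "\<And>u. 0 < u \<Longrightarrow> P u \<Longrightarrow> P (2 * u)"
    and "\<And>u. 0 < u \<Longrightarrow> P u \<Longrightarrow> P (u + 1) \<Longrightarrow> P (2 * u + 1)"
  shows "P t"
proof (induction t rule: less_induct)
  case (less t)
  show ?case
  proof (cases "t \<le> 1")
    case True
    with assms(1,2) show ?thesis by (cases t) auto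
  next
    case False
    define u where "u = t div 2"
    have "0 < u" "u < t" using False by (auto simp: u_def)
    show ?thesis
    proof (cases "even t")
      case True
      then have "t = 2 * u" by (simp add: u_def)
      with \<open>0 < u\<close> \<open>u < t\<close> less assms(3) show ?thesis by blast
    next
      case False
      then have "t = 2 * u + 1" by (simp add: u_def)
      with \<open>0 < u\<close> \<open>u < t\<close> less assms(4) show ?thesis by simp
    qed
  qed
qed

definition has_average :: "(nat \<Rightarrow> real) \<Rightarrow> real \<Rightarrow> bool" where
  "has_average f a \<longleftrightarrow> (\<lambda>N. (\<Sum>n<N. f n) / real N) \<longlonglongrightarrow> a"

lemma has_average_const: "has_average (\<lambda>n. x) x"
  unfolding has_average_def
proof (rule Lim_transform_eventually)
  show "\<forall>\<^sub>F N in sequentially. x = (\<Sum>n<N. x) / real N"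
    using eventually_gt_at_top[of 0] by eventually_elim simp
qed simp

lemma has_average_add: "has_average f a \<Longrightarrow> has_average g b \<Longrightarrow> has_average (\<lambda>n. f n + g n) (a + b)"
  unfolding has_average_def by (simp add: sum.distrib add_divide_distrib tendsto_add)

lemma has_average_nonneg: "has_average f a \<Longrightarrow> (\<And>n. f n \<ge> 0) \<Longrightarrow> a \<ge> 0"
  unfolding has_average_def
  by (rule LIMSEQ_le_const) (auto intro!: divide_nonneg_nonneg sum_nonneg)

lemma sum_lessThan_double:
  fixes f :: "nat \<Rightarrow> 'a::comm_monoid_add"
  shows "(\<Sum>n<2 * M. f n) = (\<Sum>n<M. f (2 * n)) + (\<Sum>n<M. f (2 * n + 1))"
  by (induction M) (simp_all add: ac_simps)

lemma has_average_even_odd: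
  assumes even: "has_average (\<lambda>n. f (2 * n)) a" and odd: "has_average (\<lambda>n. f (2 * n + 1)) b"
  shows "has_average f ((a + b) / 2)"
proof -
  define A where "A M = (\<Sum>n<M. f (2 * n))" for M
  define B where "B M = (\<Sum>n<M. f (2 * n + 1))" for M
  have A: "(\<lambda>M. A M / real M) \<longlonglongrightarrow> a" and B: "(\<lambda>M. B M / real M) \<longlonglongrightarrow> b"
    using even odd unfolding has_average_def A_def B_def .
  show ?thesis
    unfolding has_average_def
  proof (rule limseq_even_odd)
    have "(\<lambda>M. (\<Sum>n<2 * M. f n) / real (2 * M)) = (\<lambda>M. (A M / real M + B M / real M) / 2)"
      by (rule ext) (simp add: sum_lessThan_double A_def B_def add_divide_distrib)
    also have "\<dots> \<longlonglongrightarrow> (a + b) / 2"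
      by (intro tendsto_intros A B) simp
    finally show "(\<lambda>M. (\<Sum>n<2 * M. f n) / real (2 * M)) \<longlonglongrightarrow> (a + b) / 2" .
  next
    have "(\<Sum>n<2 * M + 1. f n) / real (2 * M + 1)
        = A (Suc M) / real (Suc M) * (real (Suc M) / real (2 * M + 1))
          + B M / real M * (real M / real (2 * M + 1))" for M
    proof -
      have "(\<Sum>n<2 * M + 1. f n) = A (Suc M) + B M"
        by (simp add: sum_lessThan_double A_def B_def)
      moreover have "A (Suc M) / real (Suc M) * (real (Suc M) / real (2 * M + 1))
          = A (Suc M) / real (2 * M + 1)"
        by (simp del: of_nat_Suc)
      moreover have "B M / real M * (real M / real (2 * M + 1)) = B M / real (2 * M + 1)"
        by (cases "M = 0") (simp_all add: B_def)
      ultimately show ?thesis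
        by (simp add: add_divide_distrib)
    qed
    then have "(\<lambda>M. (\<Sum>n<2 * M + 1. f n) / real (2 * M + 1))
        = (\<lambda>M. A (Suc M) / real (Suc M) * (real (Suc M) / real (2 * M + 1))
          + B M / real M * (real M / real (2 * M + 1)))"
      by (rule ext)
    also have "\<dots> \<longlonglongrightarrow> a * (1 / 2) + b * (1 / 2)"
    proof -
      have "(\<lambda>M. real (Suc M) / real (2 * M + 1)) \<longlonglongrightarrow> 1 / 2"
        and "(\<lambda>M. real M / real (2 * M + 1)) \<longlonglongrightarrow> 1 / 2"
        by real_asymp+
      with LIMSEQ_Suc[OF A] B show ?thesis by (intro tendsto_mult tendsto_add)
    qed
    finally show "(\<lambda>M. (\<Sum>n<2 * M + 1. f n) / real (2 * M + 1)) \<longlonglongrightarrow> (a + b) / 2"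
      by (simp add: add_divide_distrib)
  qed
qed

definition has_moments :: "(int \<Rightarrow> real) \<Rightarrow> real \<Rightarrow> real \<Rightarrow> real \<Rightarrow> bool" where
  "has_moments f m0 m1 m2 \<longleftrightarrow> (f has_sum m0) UNIV \<and> ((\<lambda>k. of_int k * f k) has_sum m1) UNIV
      \<and> ((\<lambda>k. (of_int k)\<^sup>2 * f k) has_sum m2) UNIV"

lemma has_moments_unique:
  "has_moments f m0 m1 m2 \<Longrightarrow> has_moments f n0 n1 n2 \<Longrightarrow> m0 = n0 \<and> m1 = n1 \<and> m2 = n2"
  unfolding has_moments_def using has_sum_unique by blast

lemma has_moments_add:
  "has_moments f m0 m1 m2 \<Longrightarrow> has_moments g n0 n1 n2
    \<Longrightarrow> has_moments (\<lambda>k. f k + g k) (m0 + n0) (m1 + n1) (m2 + n2)"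
  unfolding has_moments_def by (auto simp: distrib_left intro: has_sum_add)

lemma has_moments_cmult:
  assumes "has_moments f m0 m1 m2"
  shows "has_moments (\<lambda>k. x * f k) (x * m0) (x * m1) (x * m2)"
proof -
  have h0: "(f has_sum m0) UNIV" and h1: "((\<lambda>k. of_int k * f k) has_sum m1) UNIV"
    and h2: "((\<lambda>k. (of_int k)\<^sup>2 * f k) has_sum m2) UNIV"
    using assms unfolding has_moments_def by auto
  show ?thesis
    unfolding has_moments_def
    using has_sum_cmult_right[OF h0, of x] has_sum_cmult_right[OF h1, of x]
      has_sum_cmult_right[OF h2, of x]
    by (simp add: mult.left_commute)
qed

lemma has_moments_shift:
  assumes "has_moments f m0 m1 m2"
  shows "has_moments (\<lambda>k. f (k - a)) m0 (m1 + of_int a * m0)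
    (m2 + 2 * of_int a * m1 + (of_int a)\<^sup>2 * m0)"
proof -
  have bij: "bij_betw (\<lambda>k. k - a) UNIV UNIV"
    by (rule bij_betwI[where g = "\<lambda>k. k + a"]) auto
  have h0: "(f has_sum m0) UNIV" and h1: "((\<lambda>k. of_int k * f k) has_sum m1) UNIV"
    and h2: "((\<lambda>k. (of_int k)\<^sup>2 * f k) has_sum m2) UNIV"
    using assms unfolding has_moments_def by auto
  have "((\<lambda>j. (of_int j + of_int a) * f j) has_sum (m1 + of_int a * m0)) UNIV"
    using has_sum_add[OF h1 has_sum_cmult_right[OF h0, of "of_int a"]] by (simp add: distrib_right)
  then have s1: "((\<lambda>k. of_int k * f (k - a)) has_sum (m1 + of_int a * m0)) UNIV"
    using has_sum_reindex_bij_betw[OF bij, of "\<lambda>j. (of_int j + of_int a) * f j"] by simp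
  have "((\<lambda>j. (of_int j + of_int a)\<^sup>2 * f j)
      has_sum (m2 + 2 * of_int a * m1 + (of_int a)\<^sup>2 * m0)) UNIV"
    using has_sum_add[OF has_sum_add[OF h2 has_sum_cmult_right[OF h1, of "2 * of_int a"]]
        has_sum_cmult_right[OF h0, of "(of_int a)\<^sup>2"]]
    by (simp add: power2_eq_square algebra_simps)
  then have s2: "((\<lambda>k. (of_int k)\<^sup>2 * f (k - a))
      has_sum (m2 + 2 * of_int a * m1 + (of_int a)\<^sup>2 * m0)) UNIV"
    using has_sum_reindex_bij_betw[OF bij, of "\<lambda>j. (of_int j + of_int a)\<^sup>2 * f j"] by simp
  have s0: "((\<lambda>k. f (k - a)) has_sum m0) UNIV"
    using has_sum_reindex_bij_betw[OF bij, of f] h0 by simp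
  from s0 s1 s2 show ?thesis
    unfolding has_moments_def by blast
qed

lemma has_moments_average_shiftsI:
  assumes "has_moments f m0 m1 m2" and "has_moments g n0 n1 n2"
    and "h = (\<lambda>k. (f (k - a) + g (k - b)) / 2)"
    and "s0 = (m0 + n0) / 2"
    and "s1 = (m1 + of_int a * m0 + n1 + of_int b * n0) / 2"
    and "s2 = (m2 + 2 * of_int a * m1 + (of_int a)\<^sup>2 * m0
              + n2 + 2 * of_int b * n1 + (of_int b)\<^sup>2 * n0) / 2"
  shows "has_moments h s0 s1 s2"
proof -
  have "has_moments (\<lambda>k. 1 / 2 * (f (k - a) + g (k - b)))
      (1 / 2 * (m0 + n0)) (1 / 2 * (m1 + of_int a * m0 + (n1 + of_int b * n0)))
      (1 / 2 * (m2 + 2 * of_int a * m1 + (of_int a)\<^sup>2 * m0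
                + (n2 + 2 * of_int b * n1 + (of_int b)\<^sup>2 * n0)))"
    by (intro has_moments_cmult has_moments_add has_moments_shift assms(1,2))
  then show ?thesis
    unfolding assms(3-6) by (simp add: field_simps)
qed

lemma has_moments_point_mass:
  "has_moments (\<lambda>k. if k = a then x else 0) x (of_int a * x) ((of_int a)\<^sup>2 * x)"
proof -
  have point: "((\<lambda>k. if k = a then y else 0) has_sum y) UNIV" for y :: real
  proof -
    have "((\<lambda>k. if k = a then y else 0) has_sum y) {a}"
      using has_sum_finite[of "{a}" "\<lambda>k. if k = a then y else 0"] by simp
    then show ?thesis
      by (subst has_sum_cong_neutral[where T = "{a}" and g = "\<lambda>k. if k = a then y else 0"]) auto
  qed
  show ?thesis
    unfolding has_moments_def
    using point[of x] point[of "of_int a * x"] point[of "(of_int a)\<^sup>2 * x"]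
    by (simp add: if_distrib cong: if_cong)
qed

lemma abs_le_one_plus_square:
  fixes x :: real
  shows "\<bar>x\<bar> \<le> 1 + x\<^sup>2"
proof (cases "\<bar>x\<bar> \<le> 1")
  case True
  then show ?thesis using zero_le_power2[of x] by linarith
next
  case False
  then have "\<bar>x\<bar> * 1 \<le> \<bar>x\<bar> * \<bar>x\<bar>"
    by (intro mult_left_mono) auto
  also have "\<dots> = x\<^sup>2"
    by (simp add: power2_eq_square abs_mult_self_eq)
  finally show ?thesis by linarith
qed

context
  fixes f g w :: "int \<Rightarrow> real" and K :: int and G :: real
  assumes f_nonneg: "\<And>k. 0 \<le> f k" and g_nonneg: "\<And>k. 0 \<le> g k" and w_nonneg: "\<And>k. 0 \<le> w k"
    and w_shift: "\<And>k. w k \<le> 3 / 2 * w (k + 1)"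
    and rec: "\<And>k. f k = (g k + f (k + 1)) / 2"
    and vanish: "\<And>k. K < k \<Longrightarrow> f k = 0"
    and wg: "((\<lambda>k. w k * g k) has_sum G) UNIV"
begin

\<comment> \<open>By the weight condition the shifted half of the recursion contributes at most 3/4 of the
  weighted sum.\<close>
lemma sum_weighted_le_of_recursion: "(\<Sum>k\<in>{-M..K}. w k * f k) \<le> 2 * G"
proof -
  define X where "X = (\<Sum>k\<in>{-M..K}. w k * f k)"
  have "X = (\<Sum>k\<in>{-M..K}. w k * g k) / 2 + (\<Sum>k\<in>{-M..K}. w k * f (k + 1)) / 2"
    unfolding X_def
    by (subst rec) (simp add: sum_divide_distrib[symmetric] sum.distrib[symmetric] algebra_simps)
  moreover have "(\<Sum>k\<in>{-M..K}. w k * g k) \<le> G"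
    by (rule finite_sum_le_has_sum[OF wg]) (auto intro: mult_nonneg_nonneg w_nonneg g_nonneg)
  moreover have "(\<Sum>k\<in>{-M..K}. w k * f (k + 1)) \<le> 3 / 2 * X"
  proof -
    have "(\<Sum>k\<in>{-M..K}. w k * f (k + 1)) \<le> (\<Sum>k\<in>{-M..K}. 3 / 2 * (w (k + 1) * f (k + 1)))"
    proof (rule sum_mono)
      fix k
      show "w k * f (k + 1) \<le> 3 / 2 * (w (k + 1) * f (k + 1))"
        using mult_right_mono[OF w_shift[of k] f_nonneg[of "k + 1"]] by (simp add: mult.assoc)
    qed
    also have "\<dots> = 3 / 2 * (\<Sum>k\<in>{-M+1..K+1}. w k * f k)"
    proof -
      have "(\<Sum>k\<in>{-M..K}. w (k + 1) * f (k + 1)) = (\<Sum>k\<in>{-M+1..K+1}. w k * f k)"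
        by (rule sum.reindex_bij_witness[of _ "\<lambda>k. k - 1" "\<lambda>k. k + 1"]) auto
      then show ?thesis by (simp only: sum_distrib_left[symmetric])
    qed
    also have "(\<Sum>k\<in>{-M+1..K+1}. w k * f k) = (\<Sum>k\<in>{-M+1..K}. w k * f k)"
      by (rule sum.mono_neutral_right) (auto simp: vanish)
    also have "\<dots> \<le> X"
      unfolding X_def by (rule sum_mono2) (auto intro: mult_nonneg_nonneg w_nonneg f_nonneg)
    finally show ?thesis by simp
  qed
  ultimately have "X \<le> G / 2 + 3 / 4 * X" by linarith
  then show ?thesis unfolding X_def by linarith
qed

lemma summable_on_weighted_of_recursion: "(\<lambda>k. w k * f k) summable_on UNIV"
proof (rule nonneg_bdd_above_summable_on)
  show "bdd_above (sum (\<lambda>k. w k * f k) ` {F. F \<subseteq> UNIV \<and> finite F})"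
  proof (rule bdd_aboveI2)
    fix F :: "int set"
    assume "F \<in> {F. F \<subseteq> UNIV \<and> finite F}"
    then have "finite F" by simp
    define M where "M = Max (insert 0 (abs ` F))"
    have "\<bar>k\<bar> \<le> M" if "k \<in> F" for k
      unfolding M_def using \<open>finite F\<close> that by (intro Max_ge) auto
    then have "F \<inter> {..K} \<subseteq> {-M..K}" by force
    have "(\<Sum>k\<in>F. w k * f k) = (\<Sum>k\<in>F \<inter> {..K}. w k * f k)"
      by (rule sum.mono_neutral_right) (auto simp: \<open>finite F\<close> vanish not_le)
    also have "\<dots> \<le> (\<Sum>k\<in>{-M..K}. w k * f k)"
      by (rule sum_mono2)
        (use \<open>F \<inter> {..K} \<subseteq> {-M..K}\<close> in \<open>auto intro: mult_nonneg_nonneg w_nonneg f_nonneg\<close>)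
    also have "\<dots> \<le> 2 * G" by (rule sum_weighted_le_of_recursion)
    finally show "(\<Sum>k\<in>F. w k * f k) \<le> 2 * G" .
  qed
qed (intro mult_nonneg_nonneg w_nonneg f_nonneg)

end

lemma has_moments_exist_of_recursion:
  fixes f g :: "int \<Rightarrow> real"
  assumes f_nonneg: "\<And>k. 0 \<le> f k" and g_nonneg: "\<And>k. 0 \<le> g k"
    and rec: "\<And>k. f k = (g k + f (k + 1)) / 2"
    and vanish: "\<And>k. K < k \<Longrightarrow> f k = 0"
    and g: "has_moments g m0 m1 m2"
  shows "\<exists>s0 s1 s2. has_moments f s0 s1 s2"
proof -
  define w :: "int \<Rightarrow> real" where "w k = 10 + (of_int k)\<^sup>2" for k
  have w_ge: "1 \<le> w k" "\<bar>of_int k\<bar> \<le> w k" "(of_int k)\<^sup>2 \<le> w k" for k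
    using zero_le_power2[of "of_int k :: real"] abs_le_one_plus_square[of "of_int k"]
    unfolding w_def by linarith+
  have w_nonneg: "0 \<le> w k" for k
    using w_ge(1)[of k] by linarith
  have w_shift: "w k \<le> 3 / 2 * w (k + 1)" for k
  proof -
    have "0 \<le> (of_int k + 3 :: real)\<^sup>2 + 4" by simp
    then show ?thesis unfolding w_def by (simp add: power2_eq_square algebra_simps)
  qed
  have "(g has_sum m0) UNIV" "((\<lambda>k. (of_int k)\<^sup>2 * g k) has_sum m2) UNIV"
    using g unfolding has_moments_def by auto
  from has_sum_add[OF has_sum_cmult_right[OF this(1), of 10] this(2)]
  have "((\<lambda>k. w k * g k) has_sum (10 * m0 + m2)) UNIV"
    by (simp add: w_def distrib_right)
  from summable_on_weighted_of_recursion[OF f_nonneg g_nonneg w_nonneg w_shift rec vanish this]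
  have wf: "(\<lambda>k. w k * f k) summable_on UNIV" .
  have "f summable_on UNIV"
  proof (rule summable_on_comparison_test[OF wf])
    show "f k \<le> w k * f k" for k
      using mult_right_mono[OF w_ge(1)[of k] f_nonneg[of k]] by simp
  qed (rule f_nonneg)
  moreover have "(\<lambda>k. (of_int k)\<^sup>2 * f k) summable_on UNIV"
  proof (rule summable_on_comparison_test[OF wf])
    show "(of_int k)\<^sup>2 * f k \<le> w k * f k" for k
      using mult_right_mono[OF w_ge(3)[of k] f_nonneg[of k]] .
  qed (simp add: f_nonneg)
  moreover have "(\<lambda>k. norm (of_int k * f k)) summable_on UNIV"
  proof (rule summable_on_comparison_test[OF wf])
    show "norm (of_int k * f k) \<le> w k * f k" for k
      using mult_right_mono[OF w_ge(2)[of k] f_nonneg[of k]] f_nonneg[of k] by (simp add: abs_mult)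
  qed simp
  then have "(\<lambda>k. of_int k * f k) summable_on UNIV"
    by (rule summable_on_iff_abs_summable_on_real[THEN iffD2])
  ultimately show ?thesis
    unfolding has_moments_def using has_sum_infsum by blast
qed

lemma has_moments_of_recursion:
  fixes f g :: "int \<Rightarrow> real"
  assumes "\<And>k. 0 \<le> f k" and "\<And>k. 0 \<le> g k"
    and rec: "\<And>k. f k = (g k + f (k + 1)) / 2"
    and "\<And>k. K < k \<Longrightarrow> f k = 0"
    and g: "has_moments g m0 m1 m2"
  shows "has_moments f m0 (m1 - m0) (m2 - 2 * m1 + 3 * m0)"
proof -
  obtain s0 s1 s2 where f: "has_moments f s0 s1 s2"
    using has_moments_exist_of_recursion[OF assms] by blast
  have "has_moments f ((m0 + s0) / 2) ((m1 + s1 - s0) / 2) ((m2 + s2 - 2 * s1 + s0) / 2)"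
    by (rule has_moments_average_shiftsI[OF g f, where a = 0 and b = "-1"])
      (use rec in \<open>simp_all add: fun_eq_iff algebra_simps\<close>)
  from has_moments_unique[OF f this] have "s0 = m0" "s1 = m1 - m0" "s2 = m2 - 2 * m1 + 3 * m0"
    by (simp_all add: field_simps)
  with f show ?thesis by simp
qed

definition ind_par :: "nat \<Rightarrow> bool \<Rightarrow> int \<Rightarrow> nat \<Rightarrow> real" where
  "ind_par t b k n = of_bool (d t n = k \<and> odd n = b)"

definition c_par :: "nat \<Rightarrow> bool \<Rightarrow> int \<Rightarrow> real" where
  "c_par t b k = lim (\<lambda>N. (\<Sum>n<N. ind_par t b k n) / real N)"

definition c_par_exists :: "nat \<Rightarrow> bool" where
  "c_par_exists t \<longleftrightarrow> (\<forall>b k. \<exists>a. has_average (ind_par t b k) a)"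

lemma c_par_eqI: "has_average (ind_par t b k) a \<Longrightarrow> c_par t b k = a"
  unfolding c_par_def has_average_def by (rule limI)

lemma has_average_c_par: "c_par_exists t \<Longrightarrow> has_average (ind_par t b k) (c_par t b k)"
  unfolding c_par_exists_def using c_par_eqI by metis

lemma has_average_ind_par_even_False:
  assumes "c_par_exists u"
  shows "has_average (ind_par (2 * u) False k) ((c_par u False k + c_par u True k) / 2)"
proof -
  have "(\<lambda>n. ind_par (2 * u) False k (2 * n)) = (\<lambda>n. ind_par u False k n + ind_par u True k n)"
    by (intro ext, unfold ind_par_def d_even_even) auto
  then have even:
      "has_average (\<lambda>n. ind_par (2 * u) False k (2 * n)) (c_par u False k + c_par u True k)"
    using assms by (simp add: has_average_add has_average_c_par)
  have "(\<lambda>n. ind_par (2 * u) False k (2 * n + 1)) = (\<lambda>n. 0)"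
    by (simp add: ind_par_def)
  then have odd: "has_average (\<lambda>n. ind_par (2 * u) False k (2 * n + 1)) 0"
    by (simp add: has_average_const)
  from has_average_even_odd[OF even odd] show ?thesis by simp
qed

lemma has_average_ind_par_even_True:
  assumes "c_par_exists u"
  shows "has_average (ind_par (2 * u) True k)
    ((c_par u False (k - of_bool (odd u)) + c_par u True (k + of_bool (odd u))) / 2)"
proof -
  have "(\<lambda>n. ind_par (2 * u) True k (2 * n)) = (\<lambda>n. 0)"
    by (simp add: ind_par_def)
  then have even: "has_average (\<lambda>n. ind_par (2 * u) True k (2 * n)) 0"
    by (simp add: has_average_const)
  have "(\<lambda>n. ind_par (2 * u) True k (2 * n + 1))
      = (\<lambda>n. ind_par u False (k - of_bool (odd u)) n + ind_par u True (k + of_bool (odd u)) n)"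
    by (intro ext, unfold ind_par_def d_even_odd) (cases "odd n"; cases "odd u"; auto)
  then have odd: "has_average (\<lambda>n. ind_par (2 * u) True k (2 * n + 1))
      (c_par u False (k - of_bool (odd u)) + c_par u True (k + of_bool (odd u)))"
    using assms by (simp add: has_average_add has_average_c_par)
  from has_average_even_odd[OF even odd] show ?thesis by simp
qed

lemma has_average_ind_par_odd_False:
  assumes "c_par_exists u"
  shows "has_average (ind_par (2 * u + 1) False k)
    ((c_par u False (k - of_bool (odd u)) + c_par u True (k - of_bool (even u))) / 2)"
proof -
  have "(\<lambda>n. ind_par (2 * u + 1) False k (2 * n))
      = (\<lambda>n. ind_par u False (k - of_bool (odd u)) n + ind_par u True (k - of_bool (even u)) n)"
    by (intro ext, unfold ind_par_def d_odd_even) (cases "odd n"; cases "odd u"; auto)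
  then have even: "has_average (\<lambda>n. ind_par (2 * u + 1) False k (2 * n))
      (c_par u False (k - of_bool (odd u)) + c_par u True (k - of_bool (even u)))"
    using assms by (simp add: has_average_add has_average_c_par)
  have "(\<lambda>n. ind_par (2 * u + 1) False k (2 * n + 1)) = (\<lambda>n. 0)"
    by (simp add: ind_par_def)
  then have odd: "has_average (\<lambda>n. ind_par (2 * u + 1) False k (2 * n + 1)) 0"
    by (simp add: has_average_const)
  from has_average_even_odd[OF even odd] show ?thesis by simp
qed

lemma has_average_ind_par_odd_True:
  assumes "has_average (ind_par (u + 1) False k) x"
    and "has_average (ind_par (u + 1) True (k + 1)) y"
  shows "has_average (ind_par (2 * u + 1) True k) ((x + y) / 2)"
proof -
  have "(\<lambda>n. ind_par (2 * u + 1) True k (2 * n)) = (\<lambda>n. 0)"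
    by (simp add: ind_par_def)
  then have even: "has_average (\<lambda>n. ind_par (2 * u + 1) True k (2 * n)) 0"
    by (simp add: has_average_const)
  have "(\<lambda>n. ind_par (2 * u + 1) True k (2 * n + 1))
      = (\<lambda>n. ind_par (u + 1) False k n + ind_par (u + 1) True (k + 1) n)"
    by (intro ext, unfold ind_par_def d_odd_odd) (cases "odd n"; auto)
  then have odd: "has_average (\<lambda>n. ind_par (2 * u + 1) True k (2 * n + 1)) (x + y)"
    using assms by (simp add: has_average_add)
  from has_average_even_odd[OF even odd] show ?thesis by simp
qed

lemma has_average_ind_par_0: "has_average (ind_par 0 b k) (of_bool (k = 0) / 2)"
proof -
  have "(\<lambda>n. ind_par 0 b k (2 * n)) = (\<lambda>n. of_bool (k = 0 \<and> \<not> b))"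
    by (simp add: ind_par_def d_0_left)
  then have even: "has_average (\<lambda>n. ind_par 0 b k (2 * n)) (of_bool (k = 0 \<and> \<not> b))"
    by (simp add: has_average_const)
  have "(\<lambda>n. ind_par 0 b k (2 * n + 1)) = (\<lambda>n. of_bool (k = 0 \<and> b))"
    by (auto simp: ind_par_def d_0_left)
  then have odd: "has_average (\<lambda>n. ind_par 0 b k (2 * n + 1)) (of_bool (k = 0 \<and> b))"
    by (simp add: has_average_const)
  from has_average_even_odd[OF even odd] show ?thesis by (cases b) auto
qed

lemma ind_par_1_True_eq_0: "2 \<le> k \<Longrightarrow> ind_par 1 True k = (\<lambda>n. 0)"
proof
  fix n
  assume "2 \<le> k"
  then have "d 1 n \<noteq> k" using d_1_le[of n] by linarith
  then show "ind_par 1 True k n = 0" by (simp add: ind_par_def)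
qed

lemma c_par_exists_even:
  assumes "c_par_exists u"
  shows "c_par_exists (2 * u)"
  unfolding c_par_exists_def
proof (intro allI)
  fix b k
  show "\<exists>a. has_average (ind_par (2 * u) b k) a"
    by (induct b)
      (use has_average_ind_par_even_False[OF assms] has_average_ind_par_even_True[OF assms] in blast)+
qed

lemma c_par_exists_odd:
  assumes "c_par_exists u" and "c_par_exists (u + 1)"
  shows "c_par_exists (2 * u + 1)"
  unfolding c_par_exists_def
proof (intro allI)
  fix b k
  show "\<exists>a. has_average (ind_par (2 * u + 1) b k) a"
    by (induct b)
      (use has_average_ind_par_odd_False[OF assms(1)]
        has_average_ind_par_odd_True[OF has_average_c_par has_average_c_par, OF assms(2) assms(2)]
        in blast)+
qed

lemma c_par_exists_0: "c_par_exists 0"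
  unfolding c_par_exists_def using has_average_ind_par_0 by blast

lemma c_par_exists_1: "c_par_exists 1"
  unfolding c_par_exists_def
proof (intro allI)
  \<comment> \<open>The odd class refers to itself one level up; as d 1 n \<le> 1, all levels k \<ge> 2 are empty,
    and the others follow by downward induction on k.\<close>
  have odd_part: "has_average (ind_par 1 False j) (c_par 1 False j)" for j
    using has_average_ind_par_odd_False[OF c_par_exists_0, of j] c_par_eqI by simp
  have zero_above: "has_average (ind_par 1 True j) 0" if "2 \<le> j" for j
    unfolding ind_par_1_True_eq_0[OF that] by (rule has_average_const)
  have below: "\<exists>a. has_average (ind_par 1 True j) a" if "j \<le> 2" for j
    using that
  proof (induction j rule: int_le_induct)
    case base
    show ?case using zero_above[of 2] by auto
  next
    case (step j)
    then obtain a where a: "has_average (ind_par 1 True j) a" by auto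
    have "has_average (ind_par (2 * 0 + 1) True (j - 1)) ((c_par 1 False (j - 1) + a) / 2)"
      by (rule has_average_ind_par_odd_True) (use odd_part a in simp_all)
    then show ?case by auto
  qed
  fix b k
  show "\<exists>a. has_average (ind_par 1 b k) a"
  proof (induct b)
    case True
    show ?case
      using zero_above[of k] below[of k] by (cases "k \<le> 2") auto
  qed (use odd_part in blast)
qed

lemma c_par_exists_all: "c_par_exists t"
proof (induction t rule: binary_induct)
  case (even u)
  then show ?case using c_par_exists_even by blast
next
  case (odd u)
  then show ?case using c_par_exists_odd by blast
qed (fact c_par_exists_0 c_par_exists_1)+

lemma c_par_even_False: "c_par (2 * u) False k = (c_par u False k + c_par u True k) / 2"
  by (rule c_par_eqI[OF has_average_ind_par_even_False[OF c_par_exists_all]])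

lemma c_par_even_True:
  "c_par (2 * u) True k
    = (c_par u False (k - of_bool (odd u)) + c_par u True (k + of_bool (odd u))) / 2"
  by (rule c_par_eqI[OF has_average_ind_par_even_True[OF c_par_exists_all]])

lemma c_par_odd_False:
  "c_par (2 * u + 1) False k
    = (c_par u False (k - of_bool (odd u)) + c_par u True (k - of_bool (even u))) / 2"
  by (rule c_par_eqI[OF has_average_ind_par_odd_False[OF c_par_exists_all]])

lemma c_par_odd_True:
  "c_par (2 * u + 1) True k = (c_par (u + 1) False k + c_par (u + 1) True (k + 1)) / 2"
  by (rule c_par_eqI[OF has_average_ind_par_odd_True[OF has_average_c_par has_average_c_par]])
    (rule c_par_exists_all)+

lemma c_par_0: "c_par 0 b k = of_bool (k = 0) / 2"
  by (rule c_par_eqI[OF has_average_ind_par_0])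

lemma c_par_1_True_eq_0:
  assumes "2 \<le> k"
  shows "c_par 1 True k = 0"
  using has_average_const[of 0] unfolding ind_par_1_True_eq_0[OF assms, symmetric]
  by (rule c_par_eqI)

lemma c_par_nonneg: "0 \<le> c_par t b k"
  by (rule has_average_nonneg[OF has_average_c_par[OF c_par_exists_all]]) (simp add: ind_par_def)

lemma c_eq_sum_c_par: "c t k = c_par t False k + c_par t True k"
proof -
  have "real (card {n. n < N \<and> d t n = k}) = (\<Sum>n<N. ind_par t False k n + ind_par t True k n)" for N
  proof -
    have "(\<Sum>n<N. ind_par t False k n + ind_par t True k n) = (\<Sum>n<N. of_bool (d t n = k))"
      by (rule sum.cong) (auto simp: ind_par_def)
    also have "\<dots> = real (card {n. n < N \<and> d t n = k})"
      by (simp add: Int_def conj_commute lessThan_def)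
    finally show ?thesis ..
  qed
  moreover have
    "has_average (\<lambda>n. ind_par t False k n + ind_par t True k n) (c_par t False k + c_par t True k)"
    by (intro has_average_add has_average_c_par c_par_exists_all)
  ultimately show ?thesis
    unfolding c_def has_average_def by (simp add: limI)
qed

lemma has_moments_c_par_0: "has_moments (c_par 0 b) (1 / 2) 0 0"
proof -
  have "c_par 0 b = (\<lambda>k. if k = 0 then 1 / 2 else 0)"
    by (simp add: fun_eq_iff c_par_0)
  then show ?thesis using has_moments_point_mass[of 0 "1 / 2"] by simp
qed

lemma has_moments_c_par_1_False: "has_moments (c_par 1 False) (1 / 2) (1 / 4) (1 / 4)"
  by (rule has_moments_average_shiftsI[OF has_moments_c_par_0[of False] has_moments_c_par_0[of True],
        where a = 0 and b = 1])
    (use c_par_odd_False[of 0] in \<open>simp_all add: fun_eq_iff\<close>)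

lemma has_moments_c_par_1_True: "has_moments (c_par 1 True) (1 / 2) (- 1 / 4) (5 / 4)"
proof -
  have "has_moments (c_par 1 True) (1 / 2) (1 / 4 - 1 / 2) (1 / 4 - 2 * (1 / 4) + 3 * (1 / 2))"
  proof (rule has_moments_of_recursion[OF c_par_nonneg c_par_nonneg _ _ has_moments_c_par_1_False])
    show "c_par 1 True k = (c_par 1 False k + c_par 1 True (k + 1)) / 2" for k
      using c_par_odd_True[of 0 k] by simp
    show "c_par 1 True k = 0" if "1 < k" for k
      using that by (intro c_par_1_True_eq_0) simp
  qed
  then show ?thesis by simp
qed

lemma v_double: "v (2 * u) = (if even u then v u else v u + 1)"
  by (cases "u = 0") (simp, subst v.simps, simp)

lemma v_double_plus_one: "v (2 * u + 1) = (v u + v (u + 1)) / 2 + 3 / 4"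
  by (cases "u = 0") (simp add: v.simps, subst v.simps, simp)

definition parity_moments :: "nat \<Rightarrow> bool" where
  "parity_moments t \<longleftrightarrow> (\<exists>q0 q1.
      has_moments (c_par t False) (1 / 2) (of_bool (odd t) / 4) q0 \<and>
      has_moments (c_par t True) (1 / 2) (- of_bool (odd t) / 4) q1 \<and> q0 + q1 = v t)"

lemma parity_moments_0: "parity_moments 0"
  unfolding parity_moments_def using has_moments_c_par_0
  by (intro exI[of _ 0]) (simp add: v.simps)

lemma parity_moments_1: "parity_moments 1"
  unfolding parity_moments_def using has_moments_c_par_1_False has_moments_c_par_1_True
  by (intro exI[of _ "1 / 4"] exI[of _ "5 / 4"]) (simp add: v.simps)

lemma parity_moments_even:
  assumes "parity_moments u"
  shows "parity_moments (2 * u)"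
proof -
  obtain q0 q1 where F: "has_moments (c_par u False) (1 / 2) (of_bool (odd u) / 4) q0"
    and T: "has_moments (c_par u True) (1 / 2) (- of_bool (odd u) / 4) q1" and q: "q0 + q1 = v u"
    using assms unfolding parity_moments_def by blast
  have "has_moments (c_par (2 * u) False) (1 / 2) 0 ((q0 + q1) / 2)"
    by (rule has_moments_average_shiftsI[OF F T, where a = 0 and b = 0])
      (simp_all add: fun_eq_iff c_par_even_False)
  moreover have "has_moments (c_par (2 * u) True) (1 / 2) 0 ((q0 + q1) / 2 + of_bool (odd u))"
    by (rule has_moments_average_shiftsI[OF F T,
          where a = "of_bool (odd u)" and b = "- of_bool (odd u)"])
      (simp only: fun_eq_iff c_par_even_True, simp_all add: of_bool_def field_simps)
  moreover have "(q0 + q1) / 2 + ((q0 + q1) / 2 + of_bool (odd u)) = v (2 * u)"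
    using q by (simp add: v_double)
  ultimately show ?thesis
    unfolding parity_moments_def
    by (intro exI[of _ "(q0 + q1) / 2"] exI[of _ "(q0 + q1) / 2 + of_bool (odd u)"]) simp
qed

lemma parity_moments_odd:
  assumes "parity_moments u" and "parity_moments (u + 1)"
  shows "parity_moments (2 * u + 1)"
proof -
  obtain q0 q1 where F: "has_moments (c_par u False) (1 / 2) (of_bool (odd u) / 4) q0"
    and T: "has_moments (c_par u True) (1 / 2) (- of_bool (odd u) / 4) q1" and q: "q0 + q1 = v u"
    using assms(1) unfolding parity_moments_def by blast
  obtain p0 p1 where F': "has_moments (c_par (u + 1) False) (1 / 2) (of_bool (even u) / 4) p0"
    and T': "has_moments (c_par (u + 1) True) (1 / 2) (- of_bool (even u) / 4) p1"
    and p: "p0 + p1 = v (u + 1)"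
    using assms(2) unfolding parity_moments_def by auto
  have "has_moments (c_par (2 * u + 1) False) (1 / 2) (1 / 4)
      ((q0 + q1 + of_bool (odd u) + of_bool (even u) / 2) / 2)"
    by (rule has_moments_average_shiftsI[OF F T,
          where a = "of_bool (odd u)" and b = "of_bool (even u)"])
      (simp only: fun_eq_iff c_par_odd_False, simp_all add: of_bool_def field_simps)
  moreover have "has_moments (c_par (2 * u + 1) True) (1 / 2) (- 1 / 4)
      ((p0 + p1 + of_bool (even u) / 2 + 1 / 2) / 2)"
    by (rule has_moments_average_shiftsI[OF F' T', where a = 0 and b = "- 1"])
      (simp only: fun_eq_iff c_par_odd_True, simp_all add: of_bool_def field_simps)
  moreover have "(q0 + q1 + of_bool (odd u) + of_bool (even u) / 2) / 2
      + (p0 + p1 + of_bool (even u) / 2 + 1 / 2) / 2 = v (2 * u + 1)"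
    unfolding v_double_plus_one using q p by (cases "odd u") (simp_all add: field_simps)
  ultimately show ?thesis
    unfolding parity_moments_def by auto
qed

lemma parity_moments_all: "parity_moments t"
proof (induction t rule: binary_induct)
  case (even u)
  then show ?case using parity_moments_even by blast
next
  case (odd u)
  then show ?case using parity_moments_odd by blast
qed (fact parity_moments_0 parity_moments_1)+

theorem proposition3p5:
  fixes t :: nat
  shows "((\<lambda>k. real_of_int k * c t k) has_sum 0) (UNIV :: int set)
       \<and> ((\<lambda>k. (real_of_int k - 0)^2 * c t k) has_sum v t) (UNIV :: int set)"
proof -
  obtain q0 q1 where "has_moments (c_par t False) (1 / 2) (of_bool (odd t) / 4) q0"
    and "has_moments (c_par t True) (1 / 2) (- of_bool (odd t) / 4) q1" and "q0 + q1 = v t"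
    using parity_moments_all unfolding parity_moments_def by blast
  then have "has_moments (c t) 1 0 (v t)"
    using has_moments_add unfolding c_eq_sum_c_par[abs_def] by fastforce
  then show ?thesis
    unfolding has_moments_def by simp
qed

end
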